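(* Let $(A,\dashv,\vdash,\perp)$ be an associative trialgebra. Define $$[x,y]:=x\dashv y-y\vdash x\qquad\text{and}\qquad xy:=x\perp y.$$ Then the following hold. (i) The product $xy$ is associative. (ii) The bracket satisfies the (right) Leibniz identity $[[x,y],z]=[[x,z],y]+[x,[y,z]]$. (iii) For all $x,y,z\in A$, $$[xy,z]=x[y,z]+[x,z]y\qquad\text{and}\qquad [x,\,yz-zy]=[x,[y,z]].$$ That is, $(A,xy,[\,,\,])$ is a noncommutative Poisson algebra.
   Context: Let $K$ be a field. An associative trialgebra is a $K$-vector space $A$ with three bilinear operations $\dashv,\vdash,\perp$ satisfying for all $x,y,z\in A$ the following 11 relations: (1) $(x\dashv y)\dashv z=x\dashv(y\dashv z)$; (2) $(x\dashv y)\dashv z=x\dashv(y\vdash z)$; (3) $(x\vdash y)\dashv z=x\vdash(y\dashv z)$; (4) $(x\dashv y)\vdash z=x\vdash(y\vdash z)$; (5) $(x\vdash y)\vdash z=x\vdash(y\vdash z)$; (6) $(x\dashv y)\dashv z=x\dashv(y\perp z)$; (7) $(x\perp y)\dashv z=x\perp(y\dashv z)$; (8) $(x\dashv y)\perp z=x\perp(y\vdash z)$; (9) $(x\vdash y)\perp z=x\vdash(y\perp z)$; (10) $(x\perp y)\vdash z=x\vdash(y\vdash z)$; (11) $(x\perp y)\perp z=x\perp(y\perp z)$. *)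

theory Defs
  imports Complex_Main
begin

definition bilinear_op :: "('k::field \<Rightarrow> 'v::ab_group_add \<Rightarrow> 'v) \<Rightarrow> ('v \<Rightarrow> 'v \<Rightarrow> 'v) \<Rightarrow> bool" where
  "bilinear_op scale m \<longleftrightarrow>
     (\<forall>x. Vector_Spaces.linear scale scale (m x)) \<and> (\<forall>y. Vector_Spaces.linear scale scale (\<lambda>x. m x y))"

text \<open>Associative trialgebra: the 11 relations, with l = dashv, r = vdash, p = perp.\<close>
definition assoc_trialgebra ::
  "('k::field \<Rightarrow> 'v::ab_group_add \<Rightarrow> 'v) \<Rightarrow> ('v \<Rightarrow> 'v \<Rightarrow> 'v) \<Rightarrow> ('v \<Rightarrow> 'v \<Rightarrow> 'v) \<Rightarrow> ('v \<Rightarrow> 'v \<Rightarrow> 'v) \<Rightarrow> bool" where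
  "assoc_trialgebra scale l r p \<longleftrightarrow>
     Vector_Spaces.vector_space scale \<and> bilinear_op scale l \<and> bilinear_op scale r \<and> bilinear_op scale p \<and>
     (\<forall>x y z.
        l (l x y) z = l x (l y z) \<and>
        l (l x y) z = l x (r y z) \<and>
        l (r x y) z = r x (l y z) \<and>
        r (l x y) z = r x (r y z) \<and>
        r (r x y) z = r x (r y z) \<and>
        l (l x y) z = l x (p y z) \<and>
        l (p x y) z = p x (l y z) \<and>
        p (l x y) z = p x (r y z) \<and>
        p (r x y) z = r x (p y z) \<and>
        r (p x y) z = r x (r y z) \<and>
        p (p x y) z = p x (p y z))"

end

theory Submission
  imports Defs
begin

text \<open>
  Each of the identities is checked by expanding the bracket and using bi-additivity: every
  monomial on one side is carried to a monomial on the other by a single trialgebra relation.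
  The Leibniz identity only uses the relations (1)--(5), so it already holds in associative
  dialgebras. For the last identity, the key observation is that inside \<open>x \<dashv> _\<close> and
  \<open>_ \<turnstile> x\<close> a product \<open>y \<perp> z\<close> may be replaced by \<open>y \<dashv> z\<close> or by \<open>y \<turnstile> z\<close>, so that
  \<open>[x, y \<perp> z - z \<perp> y] = [x, y \<dashv> z - z \<turnstile> y] = [x, [y, z]]\<close>.
\<close>

text \<open>The relations are oriented so that, as rewrite rules, they terminate and move
  parentheses to the right; the bracket identities below are then closed by \<open>simp\<close>.\<close>

locale dialgebra =
  fixes dashv :: "'v::ab_group_add \<Rightarrow> 'v \<Rightarrow> 'v" (infixl "\<dashv>" 70)
    and vdash :: "'v \<Rightarrow> 'v \<Rightarrow> 'v" (infixl "\<turnstile>" 70)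
  assumes dashv_diff_left: "(a - b) \<dashv> c = a \<dashv> c - b \<dashv> c"
    and dashv_diff_right: "a \<dashv> (b - c) = a \<dashv> b - a \<dashv> c"
    and vdash_diff_left: "(a - b) \<turnstile> c = a \<turnstile> c - b \<turnstile> c"
    and vdash_diff_right: "a \<turnstile> (b - c) = a \<turnstile> b - a \<turnstile> c"
    and dashv_assoc: "(x \<dashv> y) \<dashv> z = x \<dashv> (y \<dashv> z)"
    and dashv_vdash_right: "x \<dashv> (y \<turnstile> z) = (x \<dashv> y) \<dashv> z"
    and vdash_dashv_assoc: "(x \<turnstile> y) \<dashv> z = x \<turnstile> (y \<dashv> z)"
    and dashv_vdash_left: "(x \<dashv> y) \<turnstile> z = x \<turnstile> (y \<turnstile> z)"
    and vdash_assoc: "(x \<turnstile> y) \<turnstile> z = x \<turnstile> (y \<turnstile> z)"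
begin

definition bracket :: "'v \<Rightarrow> 'v \<Rightarrow> 'v" where
  "bracket x y = x \<dashv> y - y \<turnstile> x"

lemma bracket_diff_right: "bracket x (a - b) = bracket x a - bracket x b"
  by (simp add: bracket_def dashv_diff_right vdash_diff_left algebra_simps)

lemma bracket_leibniz:
  "bracket (bracket x y) z = bracket (bracket x z) y + bracket x (bracket y z)"
  by (simp add: bracket_def dashv_diff_left dashv_diff_right vdash_diff_left vdash_diff_right
      dashv_assoc dashv_vdash_right vdash_dashv_assoc dashv_vdash_left vdash_assoc)

end

locale trialgebra = dialgebra dashv vdash
  for dashv :: "'v::ab_group_add \<Rightarrow> 'v \<Rightarrow> 'v" (infixl "\<dashv>" 70)
    and vdash :: "'v \<Rightarrow> 'v \<Rightarrow> 'v" (infixl "\<turnstile>" 70) +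
  fixes perp :: "'v \<Rightarrow> 'v \<Rightarrow> 'v" (infixl "\<perp>" 70)
  assumes perp_diff_left: "(a - b) \<perp> c = a \<perp> c - b \<perp> c"
    and perp_diff_right: "a \<perp> (b - c) = a \<perp> b - a \<perp> c"
    and dashv_perp_right: "x \<dashv> (y \<perp> z) = (x \<dashv> y) \<dashv> z"
    and perp_dashv_assoc: "(x \<perp> y) \<dashv> z = x \<perp> (y \<dashv> z)"
    and perp_dashv_vdash: "(x \<dashv> y) \<perp> z = x \<perp> (y \<turnstile> z)"
    and vdash_perp_assoc: "(x \<turnstile> y) \<perp> z = x \<turnstile> (y \<perp> z)"
    and vdash_perp_left: "(x \<perp> y) \<turnstile> z = x \<turnstile> (y \<turnstile> z)"
    and perp_assoc: "(x \<perp> y) \<perp> z = x \<perp> (y \<perp> z)"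
begin

lemma bracket_perp_left_derivation:
  "bracket (x \<perp> y) z = x \<perp> bracket y z + bracket x z \<perp> y"
  by (simp add: bracket_def perp_diff_left perp_diff_right
      perp_dashv_assoc perp_dashv_vdash vdash_perp_assoc)

lemma bracket_perp_eq_dashv: "bracket x (y \<perp> z) = bracket x (y \<dashv> z)"
  by (simp add: bracket_def dashv_perp_right dashv_assoc vdash_perp_left dashv_vdash_left)

lemma bracket_perp_eq_vdash: "bracket x (y \<perp> z) = bracket x (y \<turnstile> z)"
  by (simp add: bracket_def dashv_perp_right dashv_vdash_right vdash_perp_left vdash_assoc)

lemma bracket_perp_commutator:
  "bracket x (y \<perp> z - z \<perp> y) = bracket x (bracket y z)"
proof -
  have "bracket x (y \<perp> z - z \<perp> y) = bracket x (y \<perp> z) - bracket x (z \<perp> y)"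
    by (rule bracket_diff_right)
  also have "\<dots> = bracket x (y \<dashv> z) - bracket x (z \<turnstile> y)"
    using bracket_perp_eq_dashv [of x y z] bracket_perp_eq_vdash [of x z y] by simp
  also have "\<dots> = bracket x (bracket y z)"
    by (simp add: bracket_def [of y z] bracket_diff_right)
  finally show ?thesis .
qed

end

lemma bilinear_op_diff:
  assumes "bilinear_op scale m"
  shows "m x (a - b) = m x a - m x b" "m (a - b) y = m a y - m b y"
proof -
  from assms interpret right: Vector_Spaces.linear scale scale "m x"
    unfolding bilinear_op_def by blast
  from assms interpret left: Vector_Spaces.linear scale scale "\<lambda>x. m x y"
    unfolding bilinear_op_def by blast
  show "m x (a - b) = m x a - m x b" by (rule right.diff)
  show "m (a - b) y = m a y - m b y" using left.diff [of a b] by simp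
qed

lemma trialgebra_if_assoc_trialgebra:
  assumes "assoc_trialgebra scale l r p"
  shows "trialgebra l r p"
proof -
  have "bilinear_op scale l" "bilinear_op scale r" "bilinear_op scale p"
    using assms unfolding assoc_trialgebra_def by blast+
  note biadditive = bilinear_op_diff [OF this(1)] bilinear_op_diff [OF this(2)]
    bilinear_op_diff [OF this(3)]
  have relations: "l (l x y) z = l x (l y z)" "l (l x y) z = l x (r y z)"
      "l (r x y) z = r x (l y z)" "r (l x y) z = r x (r y z)" "r (r x y) z = r x (r y z)"
      "l (l x y) z = l x (p y z)" "l (p x y) z = p x (l y z)" "p (l x y) z = p x (r y z)"
      "p (r x y) z = r x (p y z)" "r (p x y) z = r x (r y z)" "p (p x y) z = p x (p y z)"
    for x y z
    using assms unfolding assoc_trialgebra_def by blast+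
  show ?thesis
    by unfold_locales
      (simp_all add: biadditive relations(1,3-5,7-11) relations(2,6) [symmetric])
qed

theorem proposition1p16:
  fixes scale :: "'k::field \<Rightarrow> 'v::ab_group_add \<Rightarrow> 'v"
    and l r p :: "'v \<Rightarrow> 'v \<Rightarrow> 'v"
  assumes "assoc_trialgebra scale l r p"
  defines "br \<equiv> (\<lambda>x y. l x y - r y x)"
  shows "(\<forall>x y z. p (p x y) z = p x (p y z))
       \<and> (\<forall>x y z. br (br x y) z = br (br x z) y + br x (br y z))
       \<and> (\<forall>x y z. br (p x y) z = p x (br y z) + p (br x z) y)
       \<and> (\<forall>x y z. br x (p y z - p z y) = br x (br y z))"
proof -
  interpret trialgebra l r p
    using assms(1) by (rule trialgebra_if_assoc_trialgebra)
  have "br = bracket"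
    by (simp add: br_def bracket_def fun_eq_iff)
  then show ?thesis
    using perp_assoc bracket_leibniz bracket_perp_left_derivation bracket_perp_commutator
    by blast
qed

end
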